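(* Let $U\in\mathscr P_{++}$ with $U^\theta\in\mathbb{SO}_+$, and let $J_t=\mathbb E[\int_t^\infty U_s^\theta ds\mid\mathcal F_t]$. Let $W$ be the unique solution associated to $(h_{EZ},U)$ for which there exist constants $0<c_1\le c_2<\infty$ with $c_1J\le W\le c_2J$ (such a solution exists). Then $W$ is the maximal solution associated to $(h_{EZ},U)$.
   Context: Work on a filtered probability space $(\Omega,\mathcal F,(\mathcal F_t)_{t\ge0},\mathbb P)$ with complete continuous filtration and trivial $\mathcal F_0$. $\mathscr P_+$ (resp. $\mathscr P_{++}$) denotes nonnegative (resp. strictly positive) progressively measurable processes. $\theta>1$ is fixed and $\rho=\frac{\theta-1}{\theta}$; $h_{EZ}(u,w)=uw^\rho$. For $U\in\mathscr P_+$, a solution associated to $(h_{EZ},U)$ is a nonnegative càdlàg progressively measurable $W$ with $\mathbb E\int_0^\infty U_sW_s^\rho ds<\infty$ and $W_t=\mathbb E[\int_t^\infty U_sW_s^\rho ds\mid\mathcal F_t]$ for all $t\ge0$; it is maximal if $W\ge W'$ for every such solution $W'$. For $X\in\mathscr P_+$, $J^X_t=\mathbb E[\int_t^\infty X_sds\mid\mathcal F_t]$; $\mathbb{SO}$ is the set of $X\in\mathscr P_{++}$ with $\mathbb E\int_0^\infty X_tdt<\infty$ and $kJ^X\le X\le KJ^X$ for constants $0<k\le K<\infty$; $\mathbb{SO}_\nu$ ($\nu\ge0$) the set of $X\in\mathbb{SO}$ with $(e^{\nu t}X_t)_{t\ge0}\in\mathbb{SO}$; $\mathbb{SO}_+=\bigcup_{\nu>0}\mathbb{SO}_\nu$.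 *)

theory Defs
  imports "HOL-Probability.Probability"
begin

text \<open>Standing assumptions: a filtered probability space (M, (F t)_{t \<ge> 0}) with a
complete, continuous (right- and left-continuous) filtration and trivial F 0.
Processes are functions real \<Rightarrow> 'a \<Rightarrow> real; only times t \<ge> 0 matter.\<close>

definition filtered_prob_space :: "'a measure \<Rightarrow> (real \<Rightarrow> 'a measure) \<Rightarrow> bool" where
  "filtered_prob_space M F \<longleftrightarrow>
     prob_space M
   \<and> (\<forall>t\<ge>0. subalgebra M (F t))
   \<and> (\<forall>s t. 0 \<le> s \<longrightarrow> s \<le> t \<longrightarrow> sets (F s) \<subseteq> sets (F t))
   \<comment> \<open>completeness: every subset of a null set belongs to F 0\<close>
   \<and> (\<forall>N\<in>null_sets M. \<forall>A. A \<subseteq> N \<longrightarrow> A \<in> sets (F 0))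
   \<comment> \<open>right-continuity\<close>
   \<and> (\<forall>t\<ge>0. sets (F t) = (\<Inter>s\<in>{t<..}. sets (F s)))
   \<comment> \<open>left-continuity\<close>
   \<and> (\<forall>t>0. sets (F t) = sigma_sets (space M) (\<Union>s\<in>{0..<t}. sets (F s)))
   \<comment> \<open>trivial F 0\<close>
   \<and> (\<forall>A\<in>sets (F 0). measure M A = 0 \<or> measure M A = 1)"

definition prog_measurable :: "'a measure \<Rightarrow> (real \<Rightarrow> 'a measure) \<Rightarrow> (real \<Rightarrow> 'a \<Rightarrow> real) \<Rightarrow> bool" where
  "prog_measurable M F X \<longleftrightarrow>
     (\<forall>t\<ge>0. (\<lambda>(s, \<omega>). X s \<omega>) \<in> (restrict_space borel {0..t} \<Otimes>\<^sub>M F t) \<rightarrow>\<^sub>M borel)"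

definition P_plus :: "'a measure \<Rightarrow> (real \<Rightarrow> 'a measure) \<Rightarrow> (real \<Rightarrow> 'a \<Rightarrow> real) \<Rightarrow> bool" where
  "P_plus M F X \<longleftrightarrow> prog_measurable M F X \<and> (\<forall>t\<ge>0. \<forall>\<omega>\<in>space M. 0 \<le> X t \<omega>)"

definition P_pplus :: "'a measure \<Rightarrow> (real \<Rightarrow> 'a measure) \<Rightarrow> (real \<Rightarrow> 'a \<Rightarrow> real) \<Rightarrow> bool" where
  "P_pplus M F X \<longleftrightarrow> prog_measurable M F X \<and> (\<forall>t\<ge>0. \<forall>\<omega>\<in>space M. 0 < X t \<omega>)"

definition cadlag :: "'a measure \<Rightarrow> (real \<Rightarrow> 'a \<Rightarrow> real) \<Rightarrow> bool" where
  "cadlag M X \<longleftrightarrow> (\<forall>\<omega>\<in>space M. \<forall>t\<ge>0.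
      continuous (at_right t) (\<lambda>s. X s \<omega>) \<and>
      (t > 0 \<longrightarrow> (\<exists>l. ((\<lambda>s. X s \<omega>) \<longlongrightarrow> l) (at_left t))))"

definition Jproc :: "'a measure \<Rightarrow> (real \<Rightarrow> 'a measure) \<Rightarrow> (real \<Rightarrow> 'a \<Rightarrow> real) \<Rightarrow> real \<Rightarrow> 'a \<Rightarrow> ennreal" where
  "Jproc M F X t = nn_cond_exp M (F t) (\<lambda>\<omega>. \<integral>\<^sup>+ s. indicator {t..} s * ennreal (X s \<omega>) \<partial>lborel)"

definition SO :: "'a measure \<Rightarrow> (real \<Rightarrow> 'a measure) \<Rightarrow> (real \<Rightarrow> 'a \<Rightarrow> real) \<Rightarrow> bool" where
  "SO M F X \<longleftrightarrow> P_pplus M F X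
     \<and> (\<integral>\<^sup>+ \<omega>. (\<integral>\<^sup>+ s. indicator {0..} s * ennreal (X s \<omega>) \<partial>lborel) \<partial>M) < \<infinity>
     \<and> (\<exists>k K. 0 < k \<and> k \<le> K \<and>
          (\<forall>t\<ge>0. AE \<omega> in M. ennreal k * Jproc M F X t \<omega> \<le> ennreal (X t \<omega>)
                             \<and> ennreal (X t \<omega>) \<le> ennreal K * Jproc M F X t \<omega>))"

definition SO_nu :: "'a measure \<Rightarrow> (real \<Rightarrow> 'a measure) \<Rightarrow> real \<Rightarrow> (real \<Rightarrow> 'a \<Rightarrow> real) \<Rightarrow> bool" where
  "SO_nu M F \<nu> X \<longleftrightarrow> SO M F X \<and> SO M F (\<lambda>t \<omega>. exp (\<nu> * t) * X t \<omega>)"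

definition SO_plus :: "'a measure \<Rightarrow> (real \<Rightarrow> 'a measure) \<Rightarrow> (real \<Rightarrow> 'a \<Rightarrow> real) \<Rightarrow> bool" where
  "SO_plus M F X \<longleftrightarrow> (\<exists>\<nu>>0. SO_nu M F \<nu> X)"

definition rho :: "real \<Rightarrow> real" where
  "rho \<theta> = (\<theta> - 1) / \<theta>"

definition h_EZ :: "real \<Rightarrow> real \<Rightarrow> real \<Rightarrow> real" where
  "h_EZ \<theta> u w = u * w powr rho \<theta>"

definition is_solution :: "'a measure \<Rightarrow> (real \<Rightarrow> 'a measure) \<Rightarrow> (real \<Rightarrow> real \<Rightarrow> real)
    \<Rightarrow> (real \<Rightarrow> 'a \<Rightarrow> real) \<Rightarrow> (real \<Rightarrow> 'a \<Rightarrow> real) \<Rightarrow> bool" where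
  "is_solution M F h U W \<longleftrightarrow> P_plus M F W \<and> cadlag M W
     \<and> (\<integral>\<^sup>+ \<omega>. (\<integral>\<^sup>+ s. indicator {0..} s * ennreal (h (U s \<omega>) (W s \<omega>)) \<partial>lborel) \<partial>M) < \<infinity>
     \<and> (\<forall>t\<ge>0. AE \<omega> in M. ennreal (W t \<omega>) =
            nn_cond_exp M (F t) (\<lambda>\<omega>. \<integral>\<^sup>+ s. indicator {t..} s * ennreal (h (U s \<omega>) (W s \<omega>)) \<partial>lborel) \<omega>)"

definition is_maximal_solution :: "'a measure \<Rightarrow> (real \<Rightarrow> 'a measure) \<Rightarrow> (real \<Rightarrow> real \<Rightarrow> real)
    \<Rightarrow> (real \<Rightarrow> 'a \<Rightarrow> real) \<Rightarrow> (real \<Rightarrow> 'a \<Rightarrow> real) \<Rightarrow> bool" where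
  "is_maximal_solution M F h U W \<longleftrightarrow> is_solution M F h U W
     \<and> (\<forall>W'. is_solution M F h U W' \<longrightarrow> (\<forall>t\<ge>0. AE \<omega> in M. W' t \<omega> \<le> W t \<omega>))"

end

theory Submission
  imports Defs
begin

(* Let V be any solution and W the given one, with W \<ge> c\<^sub>1 J.
  First V \<le> C J: for A \<in> F\<^sub>t, Young's inequality with the decaying weight B\<^sub>s = b e\<^bsup>\<gamma>(t - s)\<^esup>,
  \<gamma> = \<nu>/(\<theta> - 1), bounds U\<^sub>s V\<^sub>s\<^sup>\<rho> by a multiple of e\<^bsup>\<nu>(s - t)\<^esup> U\<^sub>s\<^sup>\<theta>, whose tail integral is
  comparable to J\<^sub>t because U\<^sup>\<theta> \<in> SO\<^sub>\<nu>, plus \<rho> B\<^sub>s V\<^sub>s; since E[V\<^sub>s | F\<^sub>t] \<le> V\<^sub>t, the latter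
  contributes at most half of \<integral>\<^sub>A V\<^sub>t, which is finite and can be absorbed. Hence V \<le> \<mu> W for
  some \<mu> \<ge> 1. As h_EZ is increasing and \<rho>-homogeneous in w with \<rho> < 1, V \<le> \<mu> W implies
  V \<le> \<mu>\<^bsup>\<rho>\<^esup> W by comparing the defining conditional expectations, and iterating gives V \<le> W. *)

lemma ennreal_le_inverse_mult_of_mult_le:
  fixes a b :: ennreal
  assumes "0 < k" "ennreal k * a \<le> b"
  shows "a \<le> ennreal (1 / k) * b"
proof -
  have "a = ennreal (1 / k) * (ennreal k * a)"
    using assms(1) by (simp add: mult.assoc[symmetric] ennreal_mult'[symmetric])
  also have "\<dots> \<le> ennreal (1 / k) * b"
    using assms(2) by (rule mult_left_mono) simp
  finally show ?thesis .
qed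

lemma le_mult_of_ennreal_bounds:
  assumes "ennreal v \<le> ennreal C * j" "ennreal c * j \<le> ennreal w" "0 < c" "0 \<le> C" "0 \<le> w"
  shows "v \<le> C / c * w"
proof -
  have "ennreal v \<le> ennreal C * (ennreal (1 / c) * ennreal w)"
    using assms(1) ennreal_le_inverse_mult_of_mult_le[OF assms(3,2)]
    by (meson mult_left_mono order_trans zero_le)
  also have "\<dots> = ennreal (C / c * w)"
    using assms(3-5) by (simp add: ennreal_mult'[symmetric])
  finally show ?thesis
    using assms(3-5) by (simp add: ennreal_le_iff)
qed

lemma ennreal_le_absorb_half:
  fixes x a :: ennreal
  assumes "x < \<infinity>" "x \<le> a + x * ennreal (1 / 2)"
  shows "x \<le> 2 * a"
proof (cases a)
  case (real q)
  obtain r where r: "x = ennreal r" "0 \<le> r" using assms(1) by (cases x) auto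
  have "ennreal r \<le> ennreal q + ennreal r * ennreal (1 / 2)"
    using assms(2) r real by simp
  also have "\<dots> = ennreal (q + r / 2)"
    using r real by (simp add: ennreal_plus divide_ennreal_def[symmetric] ennreal_divide_numeral)
  finally have "r \<le> q + r / 2"
    using real r by (subst (asm) ennreal_le_iff) auto
  then have "ennreal r \<le> ennreal (2 * q)"
    by (intro ennreal_leI) simp
  then show ?thesis
    using r real by (simp add: ennreal_mult)
qed (simp add: ennreal_mult_top)

lemma Youngs_inequality_EZ:
  fixes \<theta> u w B :: real
  assumes \<theta>: "1 < \<theta>" and u: "0 \<le> u" and w: "0 \<le> w" and B: "0 < B"
  shows "u * w powr rho \<theta> \<le> B powr (1 - \<theta>) / \<theta> * u powr \<theta> + rho \<theta> * B * w"
proof (cases "u = 0 \<or> w = 0")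
  case True
  then show ?thesis using assms by (auto simp: rho_def)
next
  case False
  then have "0 < u" "0 < w" using u w by auto
  have "(1 - \<theta>) * (1 / \<theta>) = - rho \<theta>" "\<theta> * (1 / \<theta>) = 1"
    using \<theta> by (auto simp: rho_def field_simps)
  then have "(B powr (1 - \<theta>) * u powr \<theta>) powr (1 / \<theta>) = B powr (- rho \<theta>) * u"
    using B \<open>0 < u\<close> by (simp add: powr_mult powr_powr)
  moreover have "B powr (- rho \<theta>) * (B powr rho \<theta>) = 1"
    using B by (simp add: powr_add[symmetric])
  ultimately have "u * w powr rho \<theta> = (B powr (1 - \<theta>) * u powr \<theta>) powr (1 / \<theta>) * (B * w) powr rho \<theta>"
    using B w by (simp add: powr_mult algebra_simps)
  also have "\<dots> \<le> 1 / \<theta> * (B powr (1 - \<theta>) * u powr \<theta>) + rho \<theta> * (B * w)"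
    using \<theta> B \<open>0 < u\<close> \<open>0 < w\<close> by (intro Youngs_inequality_0) (auto simp: rho_def diff_divide_distrib)
  finally show ?thesis by simp
qed

lemma h_EZ_le_weighted:
  fixes \<theta> \<nu> b s t u w :: real
  assumes \<theta>: "1 < \<theta>" and u: "0 \<le> u" and w: "0 \<le> w" and b: "0 < b"
  shows "h_EZ \<theta> u w \<le> b powr (1 - \<theta>) / \<theta> * exp (- \<nu> * t) * (exp (\<nu> * s) * u powr \<theta>)
    + rho \<theta> * (b * exp (\<nu> / (\<theta> - 1) * (t - s))) * w"
proof -
  let ?B = "b * exp (\<nu> / (\<theta> - 1) * (t - s))"
  have exponent: "\<nu> / (\<theta> - 1) * (t - s) * (1 - \<theta>) = - \<nu> * t + \<nu> * s"
    using \<theta> by (simp add: field_simps)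
  have "?B powr (1 - \<theta>) = b powr (1 - \<theta>) * exp (\<nu> / (\<theta> - 1) * (t - s) * (1 - \<theta>))"
    using b by (simp add: powr_mult exp_powr_real)
  also have "\<dots> = b powr (1 - \<theta>) * exp (- \<nu> * t) * exp (\<nu> * s)"
    unfolding exponent exp_add by (simp only: mult.assoc)
  finally have weight: "?B powr (1 - \<theta>) / \<theta> * u powr \<theta>
      = b powr (1 - \<theta>) / \<theta> * exp (- \<nu> * t) * (exp (\<nu> * s) * u powr \<theta>)"
    by (simp add: field_simps)
  show ?thesis
    using Youngs_inequality_EZ[OF \<theta> u w, of ?B] b unfolding h_EZ_def weight by simp
qed

lemma h_EZ_le_scaled:
  assumes "1 < \<theta>" "0 \<le> u" "0 \<le> v" "0 \<le> w" "0 \<le> \<mu>" "v \<le> \<mu> * w"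
  shows "h_EZ \<theta> u v \<le> \<mu> powr rho \<theta> * h_EZ \<theta> u w"
proof -
  have "v powr rho \<theta> \<le> (\<mu> * w) powr rho \<theta>"
    using assms by (intro powr_mono2) (auto simp: rho_def)
  also have "\<dots> = \<mu> powr rho \<theta> * w powr rho \<theta>"
    using assms by (simp add: powr_mult)
  finally show ?thesis
    unfolding h_EZ_def using assms(2) by (metis mult.left_commute mult_left_mono)
qed

lemma nn_integral_exp_decay:
  fixes \<gamma> c t :: real
  assumes \<gamma>: "0 < \<gamma>" and c: "0 \<le> c"
  shows "(\<integral>\<^sup>+s. indicator {t..} s * ennreal (c * exp (\<gamma> * (t - s))) \<partial>lborel) = ennreal (c / \<gamma>)"
proof -
  have "(\<integral>\<^sup>+s. indicator {t..} s * ennreal (c * exp (\<gamma> * (t - s))) \<partial>lborel)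
      = ennreal \<bar>1 / \<gamma>\<bar> * (\<integral>\<^sup>+x. indicator {t..} (t + 1 / \<gamma> * x) * ennreal (c * exp (\<gamma> * (t - (t + 1 / \<gamma> * x)))) \<partial>lborel)"
    by (rule nn_integral_real_affine) (use \<gamma> in auto)
  also have "(\<integral>\<^sup>+x. indicator {t..} (t + 1 / \<gamma> * x) * ennreal (c * exp (\<gamma> * (t - (t + 1 / \<gamma> * x)))) \<partial>lborel)
      = (\<integral>\<^sup>+x. ennreal c * (ennreal (x ^ 0 * exp (- x)) * indicator {0..} x) \<partial>lborel)"
  proof (intro nn_integral_cong)
    fix x :: real
    have "\<gamma> * (t - (t + 1 / \<gamma> * x)) = - x" "t \<le> t + 1 / \<gamma> * x \<longleftrightarrow> 0 \<le> x"
      using \<gamma> by (auto simp: field_simps)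
    then show "indicator {t..} (t + 1 / \<gamma> * x) * ennreal (c * exp (\<gamma> * (t - (t + 1 / \<gamma> * x))))
        = ennreal c * (ennreal (x ^ 0 * exp (- x)) * indicator {0..} x)"
      using c by (simp add: ennreal_mult indicator_def)
  qed
  also have "\<dots> = ennreal c"
    using nn_intergal_power_times_exp_Ici[of 0] by (subst nn_integral_cmult) auto
  finally show ?thesis
    using \<gamma> c by (simp add: ennreal_mult'[symmetric])
qed

lemma AE_le_of_set_nn_integral_le:
  assumes sub: "subalgebra M N"
    and fN: "f \<in> borel_measurable N" and gN: "g \<in> borel_measurable N"
    and fin: "(\<integral>\<^sup>+x. f x \<partial>M) < \<infinity>"
    and le: "\<And>A. A \<in> sets N \<Longrightarrow> (\<integral>\<^sup>+x\<in>A. f x \<partial>M) \<le> (\<integral>\<^sup>+x\<in>A. g x \<partial>M)"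
  shows "AE x in M. f x \<le> g x"
proof -
  have [measurable]: "f \<in> borel_measurable M" "g \<in> borel_measurable M"
    using measurable_from_subalg[OF sub] fN gN by auto
  note [measurable] = fN gN
  define B where "B = {x\<in>space N. g x < f x}"
  have B: "B \<in> sets N" unfolding B_def by measurable
  then have [measurable]: "B \<in> sets M" using sub by (auto simp: subalgebra_def)
  have space: "space N = space M" using sub by (auto simp: subalgebra_def)
  have g_le_f: "(\<integral>\<^sup>+x\<in>B. g x \<partial>M) \<le> (\<integral>\<^sup>+x\<in>B. f x \<partial>M)"
    by (intro nn_integral_mono) (auto simp: B_def space split: split_indicator)
  also have "\<dots> \<le> (\<integral>\<^sup>+x. f x \<partial>M)"
    by (intro nn_integral_mono) (auto split: split_indicator)
  finally have g_fin: "(\<integral>\<^sup>+x\<in>B. g x \<partial>M) \<noteq> \<infinity>" using fin by auto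
  have "(\<integral>\<^sup>+x. f x * indicator B x - g x * indicator B x \<partial>M)
      = (\<integral>\<^sup>+x\<in>B. f x \<partial>M) - (\<integral>\<^sup>+x\<in>B. g x \<partial>M)"
    using g_fin by (intro nn_integral_diff) (auto simp: B_def space split: split_indicator)
  also have "\<dots> = 0"
    using antisym[OF g_le_f le[OF B]] g_fin by simp
  finally have "AE x in M. f x * indicator B x - g x * indicator B x = 0"
    by (subst (asm) nn_integral_0_iff_AE) auto
  then show ?thesis
    using AE_space
  proof eventually_elim
    case (elim x)
    then show "f x \<le> g x"
      using diff_gr0_ennreal[of "g x" "f x"] by (cases "x \<in> B") (auto simp: B_def space)
  qed
qed

section \<open>Progressive processes and their tail integrals\<close>

lemma prog_measurable_slice:
  assumes "prog_measurable M F X" "0 \<le> t"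
  shows "X t \<in> borel_measurable (F t)"
proof -
  have "(\<lambda>\<omega>. (t, \<omega>)) \<in> F t \<rightarrow>\<^sub>M restrict_space borel {0..t} \<Otimes>\<^sub>M F t"
    using assms(2) by (intro measurable_Pair measurable_const measurable_ident_sets)
      (auto simp: space_restrict_space)
  from measurable_compose[OF this] assms(1) show ?thesis
    unfolding prog_measurable_def using assms(2) by auto
qed

lemma prog_measurable_compose2:
  assumes "prog_measurable M F X" "prog_measurable M F Y"
    and "(\<lambda>(x, y). g x y) \<in> borel_measurable (borel \<Otimes>\<^sub>M borel)"
  shows "prog_measurable M F (\<lambda>s \<omega>. g (X s \<omega>) (Y s \<omega>))"
  unfolding prog_measurable_def
proof (intro allI impI)
  fix t :: real assume "0 \<le> t"
  with assms(1,2) have "(\<lambda>p. (case_prod X p, case_prod Y p))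
      \<in> restrict_space borel {0..t} \<Otimes>\<^sub>M F t \<rightarrow>\<^sub>M borel \<Otimes>\<^sub>M borel"
    unfolding prog_measurable_def by (intro measurable_Pair) auto
  from measurable_compose[OF this assms(3)]
  show "(\<lambda>(s, \<omega>). g (X s \<omega>) (Y s \<omega>)) \<in> borel_measurable (restrict_space borel {0..t} \<Otimes>\<^sub>M F t)"
    by (simp add: case_prod_beta')
qed

lemma prog_measurable_deterministic:
  assumes "f \<in> borel_measurable borel"
  shows "prog_measurable M F (\<lambda>s \<omega>. f s)"
  unfolding prog_measurable_def
proof (intro allI impI)
  fix t :: real
  have "f \<in> borel_measurable (restrict_space borel {0..t})"
    using assms by (rule measurable_restrict_space1)
  then show "(\<lambda>(s, \<omega>). f s) \<in> borel_measurable (restrict_space borel {0..t} \<Otimes>\<^sub>M F t)"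
    by (simp add: case_prod_beta')
qed

locale stochastic_basis =
  fixes M :: "'a measure" and F :: "real \<Rightarrow> 'a measure"
  assumes filtered: "filtered_prob_space M F"
begin

sublocale prob_space M
  using filtered[unfolded filtered_prob_space_def] by (rule conjunct1)

lemma subalgebra_F: "0 \<le> t \<Longrightarrow> subalgebra M (F t)"
  using filtered[unfolded filtered_prob_space_def, THEN conjunct2, THEN conjunct1] by simp

lemma sets_F_mono: "0 \<le> s \<Longrightarrow> s \<le> t \<Longrightarrow> sets (F s) \<subseteq> sets (F t)"
  using filtered[unfolded filtered_prob_space_def, THEN conjunct2, THEN conjunct2, THEN conjunct1] by simp

lemma sigma_finite_subalgebra_F: "0 \<le> t \<Longrightarrow> sigma_finite_subalgebra M (F t)"
  using subalgebra_F finite_measure_axioms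
  by (intro finite_measure_subalgebra_is_sigma_finite)
    (simp add: finite_measure_subalgebra_def finite_measure_subalgebra_axioms_def)

lemma sets_F_subset: "0 \<le> t \<Longrightarrow> A \<in> sets (F t) \<Longrightarrow> A \<in> sets M"
  using subalgebra_F by (auto simp: subalgebra_def)

lemma space_in_sets_F: "0 \<le> t \<Longrightarrow> space M \<in> sets (F t)"
  by (metis sets.top subalgebra_F subalgebra_def)

lemma prog_measurable_slice_M:
  "prog_measurable M F X \<Longrightarrow> 0 \<le> t \<Longrightarrow> X t \<in> borel_measurable M"
  using measurable_from_subalg[OF subalgebra_F prog_measurable_slice] .

text \<open>On each strip \<open>{..n} \<times> \<Omega>\<close> the process, extended by 0 to negative times, is the
  progressively measurable map on \<open>[0, n] \<times> \<Omega>\<close> evaluated at the clamped time \<open>max 0 (min s n)\<close>.\<close>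
lemma prog_measurable_jointly_measurable:
  assumes "prog_measurable M F X"
  shows "(\<lambda>p. if 0 \<le> fst p then X (fst p) (snd p) else 0) \<in> borel_measurable (lborel \<Otimes>\<^sub>M M)"
proof (rule measurable_piecewise_restrict2[where A="\<lambda>n. {..real n} \<times> space M"])
  fix n :: nat
  show "{..real n} \<times> space M \<in> sets (lborel \<Otimes>\<^sub>M M)" by (intro pair_measureI) auto
  define clamp where "clamp s = max 0 (min s (real n))" for s
  have "clamp \<in> lborel \<rightarrow>\<^sub>M restrict_space borel {0..real n}"
    unfolding clamp_def by (intro measurable_restrict_space2) auto
  moreover have "measurable (lborel \<Otimes>\<^sub>M M) M \<subseteq> measurable (lborel \<Otimes>\<^sub>M M) (F (real n))"
    using subalgebra_F[of "real n"] by (intro measurable_mono) (auto simp: subalgebra_def)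
  then have "snd \<in> lborel \<Otimes>\<^sub>M M \<rightarrow>\<^sub>M F (real n)"
    using measurable_snd by blast
  ultimately have clamped: "(\<lambda>p. (clamp (fst p), snd p)) \<in> lborel \<Otimes>\<^sub>M M \<rightarrow>\<^sub>M restrict_space borel {0..real n} \<Otimes>\<^sub>M F (real n)"
    by (intro measurable_Pair measurable_compose[OF measurable_fst]) auto
  have "(\<lambda>(s, \<omega>). X s \<omega>) \<in> borel_measurable (restrict_space borel {0..real n} \<Otimes>\<^sub>M F (real n))"
    using assms unfolding prog_measurable_def by simp
  from measurable_compose[OF clamped this]
  have "(\<lambda>p. X (clamp (fst p)) (snd p)) \<in> borel_measurable (lborel \<Otimes>\<^sub>M M)"
    by simp
  then have "(\<lambda>p. if 0 \<le> fst p then X (clamp (fst p)) (snd p) else 0) \<in> borel_measurable (lborel \<Otimes>\<^sub>M M)"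
    by measurable
  then show "\<exists>h\<in>borel_measurable (lborel \<Otimes>\<^sub>M M). \<forall>p\<in>{..real n} \<times> space M.
      (if 0 \<le> fst p then X (fst p) (snd p) else 0) = h p"
    by (intro bexI[of _ "\<lambda>p. if 0 \<le> fst p then X (clamp (fst p)) (snd p) else 0"]) (auto simp: clamp_def)
next
  show "space (lborel \<Otimes>\<^sub>M M) = (\<Union>n. {..real n} \<times> space M)"
    using real_arch_simple by (fastforce simp: space_pair_measure)
qed

lemma measurable_tail_integrand:
  assumes "prog_measurable M F X" "0 \<le> t"
  shows "(\<lambda>(s, \<omega>). indicator {t..} s * ennreal (X s \<omega>)) \<in> borel_measurable (lborel \<Otimes>\<^sub>M M)"
proof -
  have "(\<lambda>p. indicator {t..} (fst p) :: ennreal) \<in> borel_measurable (lborel \<Otimes>\<^sub>M M)"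
    by measurable
  from borel_measurable_times_ennreal[OF this
      measurable_compose[OF prog_measurable_jointly_measurable[OF assms(1)] measurable_ennreal]]
  have "(\<lambda>p. indicator {t..} (fst p) * ennreal (if 0 \<le> fst p then X (fst p) (snd p) else 0))
      \<in> borel_measurable (lborel \<Otimes>\<^sub>M M)" .
  moreover have "(\<lambda>(s, \<omega>). indicator {t..} s * ennreal (X s \<omega>))
      = (\<lambda>p. indicator {t..} (fst p) * ennreal (if 0 \<le> fst p then X (fst p) (snd p) else 0))"
    using assms(2) by (auto simp: fun_eq_iff split: split_indicator)
  ultimately show ?thesis by simp
qed

lemma measurable_tail_integral:
  assumes "prog_measurable M F X" "0 \<le> t"
  shows "(\<lambda>\<omega>. \<integral>\<^sup>+s. indicator {t..} s * ennreal (X s \<omega>) \<partial>lborel) \<in> borel_measurable M"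
  using measurable_tail_integrand[OF assms]
  by (intro lborel.borel_measurable_nn_integral) (simp add: measurable_pair_swap_iff[of _ lborel M])

lemma measurable_set_nn_integral_slice:
  assumes "prog_measurable M F X" "0 \<le> t" "A \<in> sets M"
  shows "(\<lambda>s. indicator {t..} s * (\<integral>\<^sup>+\<omega>\<in>A. ennreal (X s \<omega>) \<partial>M)) \<in> borel_measurable lborel"
proof -
  have "(\<lambda>s. \<integral>\<^sup>+\<omega>. indicator {t..} s * ennreal (X s \<omega>) * indicator A \<omega> \<partial>M) \<in> borel_measurable lborel"
    using measurable_tail_integrand[OF assms(1,2)] assms(3)
    by (intro borel_measurable_nn_integral) (simp add: case_prod_beta')
  moreover have "indicator {t..} s * (\<integral>\<^sup>+\<omega>\<in>A. ennreal (X s \<omega>) \<partial>M)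
      = (\<integral>\<^sup>+\<omega>. indicator {t..} s * ennreal (X s \<omega>) * indicator A \<omega> \<partial>M)" for s
    by (auto split: split_indicator)
  ultimately show ?thesis by simp
qed

lemma set_nn_integral_tail_integral:
  assumes "prog_measurable M F X" "0 \<le> t" "A \<in> sets M"
  shows "(\<integral>\<^sup>+\<omega>\<in>A. (\<integral>\<^sup>+s. indicator {t..} s * ennreal (X s \<omega>) \<partial>lborel) \<partial>M)
       = (\<integral>\<^sup>+s. indicator {t..} s * (\<integral>\<^sup>+\<omega>\<in>A. ennreal (X s \<omega>) \<partial>M) \<partial>lborel)"
proof -
  interpret pair_sigma_finite lborel M
    by (simp add: pair_sigma_finite_def sigma_finite_lborel sigma_finite_measure_axioms)
  have "(\<lambda>(s, \<omega>). indicator {t..} s * ennreal (X s \<omega>) * indicator A \<omega>) \<in> borel_measurable (lborel \<Otimes>\<^sub>M M)"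
    using measurable_tail_integrand[OF assms(1,2)] assms(3) by (simp add: case_prod_beta')
  then have "(\<integral>\<^sup>+\<omega>. (\<integral>\<^sup>+s. indicator {t..} s * ennreal (X s \<omega>) * indicator A \<omega> \<partial>lborel) \<partial>M)
      = (\<integral>\<^sup>+s. (\<integral>\<^sup>+\<omega>. indicator {t..} s * ennreal (X s \<omega>) * indicator A \<omega> \<partial>M) \<partial>lborel)"
    by (rule Fubini')
  moreover have "(\<integral>\<^sup>+s. indicator {t..} s * ennreal (X s \<omega>) \<partial>lborel) * indicator A \<omega>
      = (\<integral>\<^sup>+s. indicator {t..} s * ennreal (X s \<omega>) * indicator A \<omega> \<partial>lborel)" for \<omega>
    by (auto split: split_indicator)
  moreover have "indicator {t..} s * (\<integral>\<^sup>+\<omega>\<in>A. ennreal (X s \<omega>) \<partial>M)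
      = (\<integral>\<^sup>+\<omega>. indicator {t..} s * ennreal (X s \<omega>) * indicator A \<omega> \<partial>M)" for s
    by (auto split: split_indicator)
  ultimately show ?thesis by simp
qed

lemma set_nn_integral_Jproc:
  assumes "prog_measurable M F X" "0 \<le> t" "A \<in> sets (F t)"
  shows "(\<integral>\<^sup>+\<omega>\<in>A. Jproc M F X t \<omega> \<partial>M)
       = (\<integral>\<^sup>+s. indicator {t..} s * (\<integral>\<^sup>+\<omega>\<in>A. ennreal (X s \<omega>) \<partial>M) \<partial>lborel)"
proof -
  interpret sigma_finite_subalgebra M "F t" using sigma_finite_subalgebra_F[OF assms(2)] .
  have "(\<integral>\<^sup>+\<omega>\<in>A. Jproc M F X t \<omega> \<partial>M)
      = (\<integral>\<^sup>+\<omega>. indicator A \<omega> * (\<integral>\<^sup>+s. indicator {t..} s * ennreal (X s \<omega>) \<partial>lborel) \<partial>M)"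
    unfolding Jproc_def mult.commute[of _ "indicator A _"]
    using assms measurable_tail_integral by (intro nn_cond_exp_intg) auto
  also have "\<dots> = (\<integral>\<^sup>+s. indicator {t..} s * (\<integral>\<^sup>+\<omega>\<in>A. ennreal (X s \<omega>) \<partial>M) \<partial>lborel)"
    using set_nn_integral_tail_integral[OF assms(1,2) sets_F_subset[OF assms(2,3)]]
    by (simp add: mult.commute)
  finally show ?thesis .
qed

section \<open>Solutions of the utility equation\<close>

lemma solution_prog_measurable: "is_solution M F h U V \<Longrightarrow> prog_measurable M F V"
  by (simp add: is_solution_def P_plus_def)

lemma solution_nonneg: "is_solution M F h U V \<Longrightarrow> 0 \<le> s \<Longrightarrow> \<omega> \<in> space M \<Longrightarrow> 0 \<le> V s \<omega>"
  by (simp add: is_solution_def P_plus_def)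

context
  fixes h :: "real \<Rightarrow> real \<Rightarrow> real" and U :: "real \<Rightarrow> 'a \<Rightarrow> real"
  assumes h_measurable: "(\<lambda>(u, w). h u w) \<in> borel_measurable (borel \<Otimes>\<^sub>M borel)"
    and U_prog: "prog_measurable M F U"
begin

lemma solution_aggregate_prog_measurable:
  "is_solution M F h U V \<Longrightarrow> prog_measurable M F (\<lambda>s \<omega>. h (U s \<omega>) (V s \<omega>))"
  using prog_measurable_compose2[OF U_prog solution_prog_measurable h_measurable] .

lemma solution_set_nn_integral:
  assumes sol: "is_solution M F h U V" and t: "0 \<le> t" and A: "A \<in> sets (F t)"
  shows "(\<integral>\<^sup>+\<omega>\<in>A. ennreal (V t \<omega>) \<partial>M)
       = (\<integral>\<^sup>+s. indicator {t..} s * (\<integral>\<^sup>+\<omega>\<in>A. ennreal (h (U s \<omega>) (V s \<omega>)) \<partial>M) \<partial>lborel)"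
proof -
  have "AE \<omega> in M. ennreal (V t \<omega>) = Jproc M F (\<lambda>s \<omega>. h (U s \<omega>) (V s \<omega>)) t \<omega>"
    using sol t unfolding is_solution_def Jproc_def by blast
  then have "(\<integral>\<^sup>+\<omega>\<in>A. ennreal (V t \<omega>) \<partial>M) = (\<integral>\<^sup>+\<omega>\<in>A. Jproc M F (\<lambda>s \<omega>. h (U s \<omega>) (V s \<omega>)) t \<omega> \<partial>M)"
    by (rule nn_set_integral_cong)
  also have "\<dots> = (\<integral>\<^sup>+s. indicator {t..} s * (\<integral>\<^sup>+\<omega>\<in>A. ennreal (h (U s \<omega>) (V s \<omega>)) \<partial>M) \<partial>lborel)"
    using set_nn_integral_Jproc[OF solution_aggregate_prog_measurable[OF sol] t A] .
  finally show ?thesis .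
qed

lemma solution_set_nn_integral_antimono:
  assumes sol: "is_solution M F h U V" and "0 \<le> t" "t \<le> s" and A: "A \<in> sets (F t)"
  shows "(\<integral>\<^sup>+\<omega>\<in>A. ennreal (V s \<omega>) \<partial>M) \<le> (\<integral>\<^sup>+\<omega>\<in>A. ennreal (V t \<omega>) \<partial>M)"
proof -
  have "A \<in> sets (F s)" using A sets_F_mono assms(2,3) by blast
  with assms show ?thesis
    unfolding solution_set_nn_integral[OF sol \<open>0 \<le> t\<close> A]
    by (subst solution_set_nn_integral[OF sol])
      (auto intro!: nn_integral_mono split: split_indicator)
qed

lemma solution_nn_integral_finite:
  assumes sol: "is_solution M F h U V" and t: "0 \<le> t"
  shows "(\<integral>\<^sup>+\<omega>. ennreal (V t \<omega>) \<partial>M) < \<infinity>"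
proof -
  let ?H = "\<lambda>s \<omega>. ennreal (h (U s \<omega>) (V s \<omega>))"
  have "(\<integral>\<^sup>+\<omega>. ennreal (V t \<omega>) \<partial>M) = (\<integral>\<^sup>+s. indicator {t..} s * (\<integral>\<^sup>+\<omega>. ?H s \<omega> \<partial>M) \<partial>lborel)"
    using solution_set_nn_integral[OF sol t space_in_sets_F[OF t]] by simp
  also have "\<dots> \<le> (\<integral>\<^sup>+s. indicator {0..} s * (\<integral>\<^sup>+\<omega>. ?H s \<omega> \<partial>M) \<partial>lborel)"
    using t by (intro nn_integral_mono) (auto split: split_indicator)
  also have "\<dots> = (\<integral>\<^sup>+\<omega>. (\<integral>\<^sup>+s. indicator {0..} s * ?H s \<omega> \<partial>lborel) \<partial>M)"
    using set_nn_integral_tail_integral[OF solution_aggregate_prog_measurable[OF sol], of 0 "space M"]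
    by simp
  also have "\<dots> < \<infinity>"
    using sol unfolding is_solution_def by blast
  finally show ?thesis .
qed

lemma solution_set_nn_integral_le_of_aggregate_le:
  assumes solV: "is_solution M F h U V" and solW: "is_solution M F h U W"
    and t: "0 \<le> t" and c: "0 \<le> c" and A: "A \<in> sets (F t)"
    and le: "\<forall>s\<ge>t. AE \<omega> in M. h (U s \<omega>) (V s \<omega>) \<le> c * h (U s \<omega>) (W s \<omega>)"
  shows "(\<integral>\<^sup>+\<omega>\<in>A. ennreal (V t \<omega>) \<partial>M) \<le> ennreal c * (\<integral>\<^sup>+\<omega>\<in>A. ennreal (W t \<omega>) \<partial>M)"
proof -
  let ?HV = "\<lambda>s \<omega>. ennreal (h (U s \<omega>) (V s \<omega>))"
  let ?HW = "\<lambda>s \<omega>. ennreal (h (U s \<omega>) (W s \<omega>))"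
  have AM: "A \<in> sets M" using sets_F_subset[OF t A] .
  have HW_meas: "(\<lambda>s. indicator {t..} s * (\<integral>\<^sup>+\<omega>\<in>A. ?HW s \<omega> \<partial>M)) \<in> borel_measurable lborel"
    using measurable_set_nn_integral_slice[OF solution_aggregate_prog_measurable[OF solW] t AM] .
  have pointwise: "(\<integral>\<^sup>+\<omega>\<in>A. ?HV s \<omega> \<partial>M) \<le> ennreal c * (\<integral>\<^sup>+\<omega>\<in>A. ?HW s \<omega> \<partial>M)"
    if "t \<le> s" for s
  proof -
    have "AE \<omega> in M. ?HV s \<omega> \<le> ennreal c * ?HW s \<omega>"
      using le that by (auto elim!: eventually_mono simp: ennreal_mult'[symmetric] c intro: ennreal_leI)
    then have "(\<integral>\<^sup>+\<omega>\<in>A. ?HV s \<omega> \<partial>M) \<le> (\<integral>\<^sup>+\<omega>. ennreal c * (?HW s \<omega> * indicator A \<omega>) \<partial>M)"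
      by (intro nn_integral_mono_AE) (auto elim!: eventually_mono split: split_indicator)
    also have "\<dots> = ennreal c * (\<integral>\<^sup>+\<omega>\<in>A. ?HW s \<omega> \<partial>M)"
      using prog_measurable_slice_M[OF solution_aggregate_prog_measurable[OF solW], of s] t that AM
      by (intro nn_integral_cmult) auto
    finally show ?thesis .
  qed
  have "(\<integral>\<^sup>+\<omega>\<in>A. ennreal (V t \<omega>) \<partial>M) = (\<integral>\<^sup>+s. indicator {t..} s * (\<integral>\<^sup>+\<omega>\<in>A. ?HV s \<omega> \<partial>M) \<partial>lborel)"
    by (rule solution_set_nn_integral[OF solV t A])
  also have "\<dots> \<le> (\<integral>\<^sup>+s. ennreal c * (indicator {t..} s * (\<integral>\<^sup>+\<omega>\<in>A. ?HW s \<omega> \<partial>M)) \<partial>lborel)"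
    using pointwise by (intro nn_integral_mono) (auto split: split_indicator)
  also have "\<dots> = ennreal c * (\<integral>\<^sup>+\<omega>\<in>A. ennreal (W t \<omega>) \<partial>M)"
    using nn_integral_cmult[OF HW_meas] solution_set_nn_integral[OF solW t A] by simp
  finally show ?thesis .
qed

lemma solution_le_of_aggregate_le:
  assumes solV: "is_solution M F h U V" and solW: "is_solution M F h U W"
    and t: "0 \<le> t" and c: "0 \<le> c"
    and le: "\<forall>s\<ge>t. AE \<omega> in M. h (U s \<omega>) (V s \<omega>) \<le> c * h (U s \<omega>) (W s \<omega>)"
  shows "AE \<omega> in M. V t \<omega> \<le> c * W t \<omega>"
proof -
  have [measurable]: "V t \<in> borel_measurable (F t)" "W t \<in> borel_measurable (F t)"
    using prog_measurable_slice[OF solution_prog_measurable[OF solV] t]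
      prog_measurable_slice[OF solution_prog_measurable[OF solW] t] by auto
  have [measurable]: "W t \<in> borel_measurable M"
    using prog_measurable_slice_M[OF solution_prog_measurable[OF solW] t] .
  have "AE \<omega> in M. ennreal (V t \<omega>) \<le> ennreal c * ennreal (W t \<omega>)"
  proof (rule AE_le_of_set_nn_integral_le[OF subalgebra_F[OF t]])
    fix A assume A: "A \<in> sets (F t)"
    then have [measurable]: "A \<in> sets M" using sets_F_subset[OF t] by blast
    have "(\<lambda>\<omega>. ennreal (W t \<omega>) * indicator A \<omega>) \<in> borel_measurable M" by measurable
    from nn_integral_cmult[OF this, of c] solution_set_nn_integral_le_of_aggregate_le[OF solV solW t c A le]
    show "(\<integral>\<^sup>+\<omega>\<in>A. ennreal (V t \<omega>) \<partial>M) \<le> (\<integral>\<^sup>+\<omega>\<in>A. ennreal c * ennreal (W t \<omega>) \<partial>M)"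
      by (simp add: mult.assoc)
  qed (use solution_nn_integral_finite[OF solV t] in auto)
  then show ?thesis
    using AE_space
    by eventually_elim (use c solution_nonneg[OF solW t] in \<open>simp add: ennreal_mult'[symmetric]\<close>)
qed

end

section \<open>The Epstein--Zin aggregator\<close>

lemma h_EZ_measurable: "(\<lambda>(u, w). h_EZ \<theta> u w) \<in> borel_measurable (borel \<Otimes>\<^sub>M borel)"
  unfolding h_EZ_def by measurable

lemma SO_nu_Jproc_weighted_le:
  assumes "SO_nu M F \<nu> X"
  shows "\<exists>C>0. \<forall>t\<ge>0. AE \<omega> in M.
    Jproc M F (\<lambda>s \<omega>. exp (\<nu> * s) * X s \<omega>) t \<omega> \<le> ennreal (C * exp (\<nu> * t)) * Jproc M F X t \<omega>"
proof -
  obtain k K where "0 < k" "k \<le> K" and bounds: "\<forall>t\<ge>0. AE \<omega> in M.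
      ennreal k * Jproc M F X t \<omega> \<le> ennreal (X t \<omega>) \<and> ennreal (X t \<omega>) \<le> ennreal K * Jproc M F X t \<omega>"
    using assms unfolding SO_nu_def SO_def by blast
  obtain k' K' where "0 < k'" "k' \<le> K'" and bounds': "\<forall>t\<ge>0. AE \<omega> in M.
      ennreal k' * Jproc M F (\<lambda>s \<omega>. exp (\<nu> * s) * X s \<omega>) t \<omega> \<le> ennreal (exp (\<nu> * t) * X t \<omega>)
    \<and> ennreal (exp (\<nu> * t) * X t \<omega>) \<le> ennreal K' * Jproc M F (\<lambda>s \<omega>. exp (\<nu> * s) * X s \<omega>) t \<omega>"
    using assms unfolding SO_nu_def SO_def by blast
  show ?thesis
  proof (intro exI[of _ "K / k'"] conjI allI impI)
    show "0 < K / k'" using \<open>0 < k\<close> \<open>k \<le> K\<close> \<open>0 < k'\<close> by simp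
    fix t :: real assume "0 \<le> t"
    from bounds[rule_format, OF this] bounds'[rule_format, OF this] show "AE \<omega> in M. Jproc M F (\<lambda>s \<omega>. exp (\<nu> * s) * X s \<omega>) t \<omega>
        \<le> ennreal (K / k' * exp (\<nu> * t)) * Jproc M F X t \<omega>"
    proof eventually_elim
      case (elim \<omega>)
      have "Jproc M F (\<lambda>s \<omega>. exp (\<nu> * s) * X s \<omega>) t \<omega> \<le> ennreal (1 / k') * ennreal (exp (\<nu> * t) * X t \<omega>)"
        using \<open>0 < k'\<close> conjunct1[OF elim(2)] by (rule ennreal_le_inverse_mult_of_mult_le)
      also have "\<dots> = ennreal (1 / k') * ennreal (exp (\<nu> * t)) * ennreal (X t \<omega>)"
        by (simp add: ennreal_mult' mult.assoc)
      also have "\<dots> \<le> ennreal (1 / k') * ennreal (exp (\<nu> * t)) * (ennreal K * Jproc M F X t \<omega>)"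
        using conjunct2[OF elim(1)] by (rule mult_left_mono) simp
      also have "\<dots> = ennreal (K / k' * exp (\<nu> * t)) * Jproc M F X t \<omega>"
      proof -
        have "ennreal (K / k' * exp (\<nu> * t)) = ennreal (1 / k') * ennreal (exp (\<nu> * t)) * ennreal K"
          using \<open>0 < k\<close> \<open>k \<le> K\<close> \<open>0 < k'\<close> by (simp add: ennreal_mult[symmetric] field_simps)
        then show ?thesis by (simp add: mult.assoc)
      qed
      finally show ?case .
    qed
  qed
qed

context
  fixes \<theta> :: real and U :: "real \<Rightarrow> 'a \<Rightarrow> real"
  assumes \<theta>: "1 < \<theta>" and U: "P_plus M F U"
begin

lemma U_prog: "prog_measurable M F U"
  using U by (simp add: P_plus_def)

lemma U_nonneg: "0 \<le> s \<Longrightarrow> \<omega> \<in> space M \<Longrightarrow> 0 \<le> U s \<omega>"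
  using U by (simp add: P_plus_def)

lemma EZ_solution_le_powr_of_le_scaled:
  assumes solV: "is_solution M F (h_EZ \<theta>) U V" and solW: "is_solution M F (h_EZ \<theta>) U W"
    and \<kappa>: "0 \<le> \<kappa>" and le: "\<forall>s\<ge>0. AE \<omega> in M. V s \<omega> \<le> \<kappa> * W s \<omega>"
  shows "\<forall>t\<ge>0. AE \<omega> in M. V t \<omega> \<le> \<kappa> powr rho \<theta> * W t \<omega>"
proof (intro allI impI)
  fix t :: real assume t: "0 \<le> t"
  show "AE \<omega> in M. V t \<omega> \<le> \<kappa> powr rho \<theta> * W t \<omega>"
  proof (rule solution_le_of_aggregate_le[OF h_EZ_measurable U_prog solV solW t])
    show "\<forall>s\<ge>t. AE \<omega> in M. h_EZ \<theta> (U s \<omega>) (V s \<omega>) \<le> \<kappa> powr rho \<theta> * h_EZ \<theta> (U s \<omega>) (W s \<omega>)"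
    proof (intro allI impI)
      fix s :: real assume "t \<le> s"
      with t have s: "0 \<le> s" by simp
      from le[rule_format, OF s] AE_space
      show "AE \<omega> in M. h_EZ \<theta> (U s \<omega>) (V s \<omega>) \<le> \<kappa> powr rho \<theta> * h_EZ \<theta> (U s \<omega>) (W s \<omega>)"
        by eventually_elim
          (rule h_EZ_le_scaled; use \<theta> \<kappa> s U_nonneg solution_nonneg[OF solV] solution_nonneg[OF solW] in auto)
    qed
  qed simp
qed

lemma EZ_solution_le_of_le_scaled:
  assumes solV: "is_solution M F (h_EZ \<theta>) U V" and solW: "is_solution M F (h_EZ \<theta>) U W"
    and \<mu>: "1 \<le> \<mu>" and le: "\<forall>s\<ge>0. AE \<omega> in M. V s \<omega> \<le> \<mu> * W s \<omega>"
  shows "\<forall>t\<ge>0. AE \<omega> in M. V t \<omega> \<le> W t \<omega>"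
proof (intro allI impI)
  fix t :: real assume t: "0 \<le> t"
  have iterated: "\<forall>s\<ge>0. AE \<omega> in M. V s \<omega> \<le> \<mu> powr (rho \<theta> ^ n) * W s \<omega>" for n
  proof (induction n)
    case 0
    then show ?case using le \<mu> by simp
  next
    case (Suc n)
    then show ?case
      using EZ_solution_le_powr_of_le_scaled[OF solV solW, of "\<mu> powr (rho \<theta> ^ n)"]
      by (simp add: powr_powr mult.commute)
  qed
  have lim: "(\<lambda>n. \<mu> powr (rho \<theta> ^ n) * W t \<omega>) \<longlonglongrightarrow> W t \<omega>" for \<omega>
  proof -
    have "(\<lambda>n. rho \<theta> ^ n) \<longlonglongrightarrow> 0"
      using \<theta> by (intro LIMSEQ_power_zero) (auto simp: rho_def)
    then have "(\<lambda>n. \<mu> powr (rho \<theta> ^ n)) \<longlonglongrightarrow> \<mu> powr 0"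
      using \<mu> by (intro tendsto_powr tendsto_const) auto
    then show ?thesis
      using \<mu> tendsto_mult_right[of _ 1 sequentially "W t \<omega>"] by simp
  qed
  have "AE \<omega> in M. \<forall>n. V t \<omega> \<le> \<mu> powr (rho \<theta> ^ n) * W t \<omega>"
    using iterated t by (subst AE_all_countable) auto
  then show "AE \<omega> in M. V t \<omega> \<le> W t \<omega>"
    by (rule eventually_mono) (use LIMSEQ_le_const[OF lim] in blast)
qed

lemma prog_measurable_weighted_power: "prog_measurable M F (\<lambda>s \<omega>. exp (\<nu> * s) * U s \<omega> powr \<theta>)"
proof -
  have "(\<lambda>(a, u). a * u powr \<theta>) \<in> borel_measurable (borel \<Otimes>\<^sub>M borel)"
    by measurable
  from prog_measurable_compose2[OF prog_measurable_deterministic U_prog this]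
  show ?thesis by simp
qed

lemma EZ_aggregate_set_nn_integral_le:
  assumes sol: "is_solution M F (h_EZ \<theta>) U V" and t: "0 \<le> t" "t \<le> s"
    and A: "A \<in> sets (F t)" and b: "0 < b"
  shows "(\<integral>\<^sup>+\<omega>\<in>A. ennreal (h_EZ \<theta> (U s \<omega>) (V s \<omega>)) \<partial>M)
    \<le> ennreal (b powr (1 - \<theta>) / \<theta> * exp (- \<nu> * t)) * (\<integral>\<^sup>+\<omega>\<in>A. ennreal (exp (\<nu> * s) * U s \<omega> powr \<theta>) \<partial>M)
      + ennreal (rho \<theta> * (b * exp (\<nu> / (\<theta> - 1) * (t - s)))) * (\<integral>\<^sup>+\<omega>\<in>A. ennreal (V t \<omega>) \<partial>M)"
proof -
  define a where "a = b powr (1 - \<theta>) / \<theta> * exp (- \<nu> * t)"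
  define \<beta> where "\<beta> = rho \<theta> * (b * exp (\<nu> / (\<theta> - 1) * (t - s)))"
  have s: "0 \<le> s" using t by simp
  have [measurable]: "U s \<in> borel_measurable M" "V s \<in> borel_measurable M" "A \<in> sets M"
    using prog_measurable_slice_M[OF U_prog s] prog_measurable_slice_M[OF solution_prog_measurable[OF sol] s]
      sets_F_subset[OF t(1) A] by auto
  have pointwise: "ennreal (h_EZ \<theta> (U s \<omega>) (V s \<omega>))
      \<le> ennreal a * ennreal (exp (\<nu> * s) * U s \<omega> powr \<theta>) + ennreal \<beta> * ennreal (V s \<omega>)"
    if \<omega>: "\<omega> \<in> space M" for \<omega>
  proof -
    have nonneg: "0 \<le> a" "0 \<le> exp (\<nu> * s) * U s \<omega> powr \<theta>" "0 \<le> \<beta>" "0 \<le> V s \<omega>"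
      using \<theta> b solution_nonneg[OF sol s \<omega>] by (auto simp: a_def \<beta>_def rho_def)
    have "ennreal (h_EZ \<theta> (U s \<omega>) (V s \<omega>)) \<le> ennreal (a * (exp (\<nu> * s) * U s \<omega> powr \<theta>) + \<beta> * V s \<omega>)"
      unfolding a_def \<beta>_def
      using h_EZ_le_weighted[OF \<theta> U_nonneg[OF s \<omega>] solution_nonneg[OF sol s \<omega>] b] by (rule ennreal_leI)
    also have "\<dots> = ennreal a * ennreal (exp (\<nu> * s) * U s \<omega> powr \<theta>) + ennreal \<beta> * ennreal (V s \<omega>)"
      using nonneg by (simp add: ennreal_plus ennreal_mult)
    finally show ?thesis .
  qed
  have "(\<integral>\<^sup>+\<omega>\<in>A. ennreal (h_EZ \<theta> (U s \<omega>) (V s \<omega>)) \<partial>M)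
      \<le> (\<integral>\<^sup>+\<omega>. ennreal a * (ennreal (exp (\<nu> * s) * U s \<omega> powr \<theta>) * indicator A \<omega>)
        + ennreal \<beta> * (ennreal (V s \<omega>) * indicator A \<omega>) \<partial>M)"
    using pointwise by (intro nn_integral_mono) (auto split: split_indicator)
  also have "\<dots> = ennreal a * (\<integral>\<^sup>+\<omega>\<in>A. ennreal (exp (\<nu> * s) * U s \<omega> powr \<theta>) \<partial>M)
      + ennreal \<beta> * (\<integral>\<^sup>+\<omega>\<in>A. ennreal (V s \<omega>) \<partial>M)"
    by (simp add: nn_integral_add nn_integral_cmult)
  also have "\<dots> \<le> ennreal a * (\<integral>\<^sup>+\<omega>\<in>A. ennreal (exp (\<nu> * s) * U s \<omega> powr \<theta>) \<partial>M)
      + ennreal \<beta> * (\<integral>\<^sup>+\<omega>\<in>A. ennreal (V t \<omega>) \<partial>M)"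
    using solution_set_nn_integral_antimono[OF h_EZ_measurable U_prog sol t A]
    by (intro add_left_mono mult_left_mono) auto
  finally show ?thesis by (simp only: a_def \<beta>_def)
qed

lemma EZ_solution_set_nn_integral_self_bound:
  assumes sol: "is_solution M F (h_EZ \<theta>) U V" and \<nu>: "0 < \<nu>" and b: "0 < b"
    and t: "0 \<le> t" and A: "A \<in> sets (F t)"
  shows "(\<integral>\<^sup>+\<omega>\<in>A. ennreal (V t \<omega>) \<partial>M)
    \<le> ennreal (b powr (1 - \<theta>) / \<theta> * exp (- \<nu> * t)) * (\<integral>\<^sup>+\<omega>\<in>A. Jproc M F (\<lambda>s \<omega>. exp (\<nu> * s) * U s \<omega> powr \<theta>) t \<omega> \<partial>M)
      + (\<integral>\<^sup>+\<omega>\<in>A. ennreal (V t \<omega>) \<partial>M) * ennreal (rho \<theta> * b / (\<nu> / (\<theta> - 1)))"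
proof -
  define X where "X = (\<integral>\<^sup>+\<omega>\<in>A. ennreal (V t \<omega>) \<partial>M)"
  define a where "a = b powr (1 - \<theta>) / \<theta> * exp (- \<nu> * t)"
  let ?P = "\<lambda>s. indicator {t..} s * (\<integral>\<^sup>+\<omega>\<in>A. ennreal (exp (\<nu> * s) * U s \<omega> powr \<theta>) \<partial>M)"
  let ?E = "\<lambda>s. indicator {t..} s * ennreal (rho \<theta> * b * exp (\<nu> / (\<theta> - 1) * (t - s)))"
  have P: "?P \<in> borel_measurable lborel"
    using measurable_set_nn_integral_slice[OF prog_measurable_weighted_power t sets_F_subset[OF t A]] .
  have E: "?E \<in> borel_measurable lborel" by measurable
  have "X = (\<integral>\<^sup>+s. indicator {t..} s * (\<integral>\<^sup>+\<omega>\<in>A. ennreal (h_EZ \<theta> (U s \<omega>) (V s \<omega>)) \<partial>M) \<partial>lborel)"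
    unfolding X_def by (rule solution_set_nn_integral[OF h_EZ_measurable U_prog sol t A])
  also have "\<dots> \<le> (\<integral>\<^sup>+s. ennreal a * ?P s + X * ?E s \<partial>lborel)"
  proof (intro nn_integral_mono)
    fix s
    show "indicator {t..} s * (\<integral>\<^sup>+\<omega>\<in>A. ennreal (h_EZ \<theta> (U s \<omega>) (V s \<omega>)) \<partial>M) \<le> ennreal a * ?P s + X * ?E s"
      using EZ_aggregate_set_nn_integral_le[OF sol t _ A b, of s \<nu>]
      by (cases "t \<le> s") (simp_all add: a_def X_def mult_ac)
  qed
  also have "\<dots> = ennreal a * (\<integral>\<^sup>+s. ?P s \<partial>lborel) + X * (\<integral>\<^sup>+s. ?E s \<partial>lborel)"
    unfolding nn_integral_add[OF borel_measurable_times_ennreal[OF borel_measurable_const P]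
        borel_measurable_times_ennreal[OF borel_measurable_const E]]
      nn_integral_cmult[OF P] nn_integral_cmult[OF E] ..
  also have "(\<integral>\<^sup>+s. ?E s \<partial>lborel) = ennreal (rho \<theta> * b / (\<nu> / (\<theta> - 1)))"
    using \<theta> \<nu> b by (intro nn_integral_exp_decay) (auto simp: rho_def)
  finally show ?thesis
    unfolding set_nn_integral_Jproc[OF prog_measurable_weighted_power t A] a_def X_def .
qed

lemma EZ_solution_set_nn_integral_le:
  assumes sol: "is_solution M F (h_EZ \<theta>) U V" and \<nu>: "0 < \<nu>"
  shows "\<exists>c>0. \<forall>t\<ge>0. \<forall>A\<in>sets (F t). (\<integral>\<^sup>+\<omega>\<in>A. ennreal (V t \<omega>) \<partial>M)
    \<le> ennreal (c * exp (- \<nu> * t)) * (\<integral>\<^sup>+\<omega>\<in>A. Jproc M F (\<lambda>s \<omega>. exp (\<nu> * s) * U s \<omega> powr \<theta>) t \<omega> \<partial>M)"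
proof -
  define b where "b = \<nu> / (\<theta> - 1) / (2 * rho \<theta>)"
  have b: "0 < b" and half: "rho \<theta> * b / (\<nu> / (\<theta> - 1)) = 1 / 2"
    using \<theta> \<nu> by (auto simp: b_def rho_def)
  show ?thesis
  proof (intro exI[of _ "2 * (b powr (1 - \<theta>) / \<theta>)"] conjI ballI allI impI)
    show "0 < 2 * (b powr (1 - \<theta>) / \<theta>)" using \<theta> b by simp
    fix t A assume t: "0 \<le> t" and A: "A \<in> sets (F t)"
    have "(\<integral>\<^sup>+\<omega>\<in>A. ennreal (V t \<omega>) \<partial>M) \<le> (\<integral>\<^sup>+\<omega>. ennreal (V t \<omega>) \<partial>M)"
      by (intro nn_integral_mono) (auto split: split_indicator)
    then have "(\<integral>\<^sup>+\<omega>\<in>A. ennreal (V t \<omega>) \<partial>M) < \<infinity>"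
      using solution_nn_integral_finite[OF h_EZ_measurable U_prog sol t] by simp
    from ennreal_le_absorb_half[OF this EZ_solution_set_nn_integral_self_bound[OF sol \<nu> b t A, unfolded half]]
    have "(\<integral>\<^sup>+\<omega>\<in>A. ennreal (V t \<omega>) \<partial>M) \<le> 2 * ennreal (b powr (1 - \<theta>) / \<theta> * exp (- \<nu> * t))
        * (\<integral>\<^sup>+\<omega>\<in>A. Jproc M F (\<lambda>s \<omega>. exp (\<nu> * s) * U s \<omega> powr \<theta>) t \<omega> \<partial>M)"
      by (simp only: mult.assoc)
    also have "2 * ennreal (b powr (1 - \<theta>) / \<theta> * exp (- \<nu> * t)) = ennreal (2 * (b powr (1 - \<theta>) / \<theta>) * exp (- \<nu> * t))"
      using ennreal_mult'[of 2 "b powr (1 - \<theta>) / \<theta> * exp (- \<nu> * t)"] by (simp add: mult.assoc)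
    finally show "(\<integral>\<^sup>+\<omega>\<in>A. ennreal (V t \<omega>) \<partial>M) \<le> ennreal (2 * (b powr (1 - \<theta>) / \<theta>) * exp (- \<nu> * t))
        * (\<integral>\<^sup>+\<omega>\<in>A. Jproc M F (\<lambda>s \<omega>. exp (\<nu> * s) * U s \<omega> powr \<theta>) t \<omega> \<partial>M)" .
  qed
qed

lemma EZ_solution_le_Jproc:
  assumes sol: "is_solution M F (h_EZ \<theta>) U V" and \<nu>: "0 < \<nu>"
    and SO: "SO_nu M F \<nu> (\<lambda>t \<omega>. U t \<omega> powr \<theta>)"
  shows "\<exists>C>0. \<forall>t\<ge>0. AE \<omega> in M. ennreal (V t \<omega>) \<le> ennreal C * Jproc M F (\<lambda>s \<omega>. U s \<omega> powr \<theta>) t \<omega>"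
proof -
  let ?J = "Jproc M F (\<lambda>s \<omega>. U s \<omega> powr \<theta>)"
  let ?J\<^sub>\<nu> = "Jproc M F (\<lambda>s \<omega>. exp (\<nu> * s) * U s \<omega> powr \<theta>)"
  obtain c where c: "0 < c" and set_le: "\<forall>t\<ge>0. \<forall>A\<in>sets (F t).
      (\<integral>\<^sup>+\<omega>\<in>A. ennreal (V t \<omega>) \<partial>M) \<le> ennreal (c * exp (- \<nu> * t)) * (\<integral>\<^sup>+\<omega>\<in>A. ?J\<^sub>\<nu> t \<omega> \<partial>M)"
    using EZ_solution_set_nn_integral_le[OF sol \<nu>] by blast
  obtain K where K: "0 < K"
    and weighted: "\<forall>t\<ge>0. AE \<omega> in M. ?J\<^sub>\<nu> t \<omega> \<le> ennreal (K * exp (\<nu> * t)) * ?J t \<omega>"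
    using SO_nu_Jproc_weighted_le[OF SO] by blast
  show ?thesis
  proof (intro exI[of _ "c * K"] conjI allI impI)
    show "0 < c * K" using c K by simp
    fix t :: real assume t: "0 \<le> t"
    have [measurable]: "?J t \<in> borel_measurable (F t)" "?J t \<in> borel_measurable M"
      "V t \<in> borel_measurable (F t)"
      using measurable_from_subalg[OF subalgebra_F[OF t]]
        prog_measurable_slice[OF solution_prog_measurable[OF sol] t]
      unfolding Jproc_def by auto
    show "AE \<omega> in M. ennreal (V t \<omega>) \<le> ennreal (c * K) * ?J t \<omega>"
    proof (rule AE_le_of_set_nn_integral_le[OF subalgebra_F[OF t]])
      fix A assume A: "A \<in> sets (F t)"
      have [measurable]: "A \<in> sets M" using sets_F_subset[OF t A] .
      have "(\<integral>\<^sup>+\<omega>\<in>A. ennreal (V t \<omega>) \<partial>M) \<le> ennreal (c * exp (- \<nu> * t)) * (\<integral>\<^sup>+\<omega>\<in>A. ?J\<^sub>\<nu> t \<omega> \<partial>M)"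
        using set_le t A by blast
      also have "\<dots> \<le> ennreal (c * exp (- \<nu> * t)) * (\<integral>\<^sup>+\<omega>. ennreal (K * exp (\<nu> * t)) * (?J t \<omega> * indicator A \<omega>) \<partial>M)"
        using weighted t by (intro mult_left_mono nn_integral_mono_AE) (auto elim!: eventually_mono split: split_indicator)
      also have "\<dots> = ennreal (c * exp (- \<nu> * t)) * ennreal (K * exp (\<nu> * t)) * (\<integral>\<^sup>+\<omega>\<in>A. ?J t \<omega> \<partial>M)"
        by (simp add: nn_integral_cmult mult.assoc)
      also have "ennreal (c * exp (- \<nu> * t)) * ennreal (K * exp (\<nu> * t)) = ennreal (c * K)"
        using c K by (simp add: ennreal_mult[symmetric] exp_minus field_simps)
      also have "ennreal (c * K) * (\<integral>\<^sup>+\<omega>\<in>A. ?J t \<omega> \<partial>M) = (\<integral>\<^sup>+\<omega>\<in>A. ennreal (c * K) * ?J t \<omega> \<partial>M)"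
        by (simp add: nn_integral_cmult[symmetric] mult.assoc)
      finally show "(\<integral>\<^sup>+\<omega>\<in>A. ennreal (V t \<omega>) \<partial>M) \<le> (\<integral>\<^sup>+\<omega>\<in>A. ennreal (c * K) * ?J t \<omega> \<partial>M)" .
    qed (use solution_nn_integral_finite[OF h_EZ_measurable U_prog sol t] in auto)
  qed
qed

lemma EZ_solution_le_of_Jproc_lower_bound:
  assumes solV: "is_solution M F (h_EZ \<theta>) U V" and solW: "is_solution M F (h_EZ \<theta>) U W"
    and \<nu>: "0 < \<nu>" and SO: "SO_nu M F \<nu> (\<lambda>t \<omega>. U t \<omega> powr \<theta>)" and c: "0 < c"
    and lower: "\<forall>t\<ge>0. AE \<omega> in M. ennreal c * Jproc M F (\<lambda>s \<omega>. U s \<omega> powr \<theta>) t \<omega> \<le> ennreal (W t \<omega>)"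
  shows "\<forall>t\<ge>0. AE \<omega> in M. V t \<omega> \<le> W t \<omega>"
proof -
  obtain C where "0 < C" and upper: "\<forall>t\<ge>0. AE \<omega> in M.
      ennreal (V t \<omega>) \<le> ennreal C * Jproc M F (\<lambda>s \<omega>. U s \<omega> powr \<theta>) t \<omega>"
    using EZ_solution_le_Jproc[OF solV \<nu> SO] by blast
  have "\<forall>s\<ge>0. AE \<omega> in M. V s \<omega> \<le> max 1 (C / c) * W s \<omega>"
  proof (intro allI impI)
    fix s :: real assume s: "0 \<le> s"
    from upper[rule_format, OF s] lower[rule_format, OF s] AE_space
    show "AE \<omega> in M. V s \<omega> \<le> max 1 (C / c) * W s \<omega>"
    proof eventually_elim
      case (elim \<omega>)
      have "0 \<le> W s \<omega>" using solution_nonneg[OF solW s elim(3)] .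
      moreover from this have "V s \<omega> \<le> C / c * W s \<omega>"
        using le_mult_of_ennreal_bounds[OF elim(1,2)] c \<open>0 < C\<close> by simp
      ultimately show ?case
        by (meson max.cobounded2 mult_right_mono order_trans)
    qed
  qed
  then show ?thesis
    using EZ_solution_le_of_le_scaled[OF solV solW max.cobounded1] by blast
qed

end

end

theorem proposition7p5:
  fixes M :: "'a measure" and F :: "real \<Rightarrow> 'a measure"
    and \<theta> c\<^sub>1 c\<^sub>2 :: real and U W :: "real \<Rightarrow> 'a \<Rightarrow> real"
  assumes "filtered_prob_space M F"
    and "\<theta> > 1"
    and "P_pplus M F U"
    and "SO_plus M F (\<lambda>t \<omega>. U t \<omega> powr \<theta>)"
    and "is_solution M F (h_EZ \<theta>) U W"
    and "0 < c\<^sub>1" and "c\<^sub>1 \<le> c\<^sub>2"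
    and "\<forall>t\<ge>0. AE \<omega> in M.
           ennreal c\<^sub>1 * Jproc M F (\<lambda>s \<omega>. U s \<omega> powr \<theta>) t \<omega> \<le> ennreal (W t \<omega>)
         \<and> ennreal (W t \<omega>) \<le> ennreal c\<^sub>2 * Jproc M F (\<lambda>s \<omega>. U s \<omega> powr \<theta>) t \<omega>"
  shows "is_maximal_solution M F (h_EZ \<theta>) U W"
proof -
  interpret stochastic_basis M F by (rule stochastic_basis.intro) fact
  obtain \<nu> where \<nu>: "0 < \<nu>" and SO: "SO_nu M F \<nu> (\<lambda>t \<omega>. U t \<omega> powr \<theta>)"
    using assms(4) unfolding SO_plus_def by blast
  have U: "P_plus M F U"
    using assms(3) by (auto simp: P_pplus_def P_plus_def less_imp_le)
  have lower: "\<forall>t\<ge>0. AE \<omega> in M. ennreal c\<^sub>1 * Jproc M F (\<lambda>s \<omega>. U s \<omega> powr \<theta>) t \<omega> \<le> ennreal (W t \<omega>)"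
    using assms(8) by (auto elim: eventually_mono)
  show ?thesis
    unfolding is_maximal_solution_def
    using EZ_solution_le_of_Jproc_lower_bound[OF assms(2) U _ assms(5) \<nu> SO assms(6) lower] assms(5)
    by blast
qed

end
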